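(* Let $p(\cdot)\in\mathcal P^{\log}_\pm(\mathbb B)$ and let $q$ be a constant with $q>p_++1$. There exists a constant $C>0$ depending only on $p(\cdot)$ (and $n,\alpha,q$) such that for every weight $w$, $$[w]_{B_q}\le C[w]_{B^+_{p(\cdot)}}.$$ In particular $B^+_{p(\cdot)}\subset B_q$.
   Context: $\mathbb B$ unit ball of $\mathbb C^n$, $\alpha>0$, $d\mu_\alpha(z)=(1-|z|^2)^{\alpha-1}d\mu(z)$ ($\mu$ Lebesgue measure). Pseudo-distance $d(z,\zeta)=\big||z|-|\zeta|\big|+\big|1-\frac{\langle z,\zeta\rangle}{|z||\zeta|}\big|$ ($z,\zeta\neq0$), $d(z,\zeta)=|z|+|\zeta|$ otherwise; pseudo-balls $B(z,r)=\{\zeta:d(z,\zeta)<r\}$; $\mathcal B$ is the set of pseudo-balls $B(z,r)$ with $r>1-|z|$ (those whose closure meets $\partial\mathbb B$). A weight is a non-negative locally integrable function; $w(B)=\int_Bw\,d\mu_\alpha$. $\mathcal P^{\log}_\pm(\mathbb B)$: measurable $p$ with $p_-:=\operatorname{ess\,inf}p>1$ and $|p(z)-p(\zeta)|\le c/\ln(e+1/d(z,\zeta))$ for some $c$ and all $z\neq\zeta$; $p_+=\operatorname{ess\,sup}p$, $1/p+1/p'=1$. For an exponent $r(\cdot)$ with $0<r_-\le r_+<\infty$, $\|f\|_{r(\cdot)}=\inf\{\lambda>0:\int_{\mathbb B}|f/\lambda|^{r(z)}d\mu_\alpha\le1\}$. $p_B=\big(\frac1{\mu_\alpha(B)}\int_B\frac1{p}d\mu_\alpha\big)^{-1}$.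 $[w]_{B^+_{p(\cdot)}}=\sup_{B\in\mathcal B}\mu_\alpha(B)^{-p_B}\,w(B)\,\|w^{-1}\chi_B\|_{p'(\cdot)/p(\cdot)}$. For constant $q>1$, $[w]_{B_q}=\sup_{B\in\mathcal B}\big(\frac{1}{\mu_\alpha(B)}\int_Bw\,d\mu_\alpha\big)\big(\frac1{\mu_\alpha(B)}\int_Bw^{-1/(q-1)}d\mu_\alpha\big)^{q-1}$, and $B_q$, $B^+_{p(\cdot)}$ are the classes of weights where these are finite. *)

theory Defs
  imports "HOL-Probability.Probability"
begin

text \<open>Points of C^n are vectors of type complex^'n; 'n is a finite index type, n = CARD('n).
  The unit ball is ball 0 1 (norm = Euclidean norm).\<close>

definition cinner :: "complex^'n \<Rightarrow> complex^'n \<Rightarrow> complex" where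
  "cinner z u = (\<Sum>i\<in>UNIV. z$i * cnj (u$i))"

definition pdist :: "complex^'n \<Rightarrow> complex^'n \<Rightarrow> real" where
  "pdist z u = (if z \<noteq> 0 \<and> u \<noteq> 0
     then \<bar>norm z - norm u\<bar> + cmod (1 - cinner z u / complex_of_real (norm z * norm u))
     else norm z + norm u)"

definition pball :: "complex^'n \<Rightarrow> real \<Rightarrow> (complex^'n) set" where
  "pball z r = {u \<in> ball 0 1. pdist z u < r}"

text \<open>The family of pseudo-balls whose closure meets the boundary.\<close>
definition bdry_balls :: "(complex^'n) set set" where
  "bdry_balls = {pball z r | z r. z \<in> ball 0 1 \<and> r > 1 - norm z}"

definition mu_alpha :: "real \<Rightarrow> (complex^'n) measure" where
  "mu_alpha \<alpha> = density lebesgue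
     (\<lambda>z. indicator (ball 0 1) z * ennreal ((1 - (norm z)\<^sup>2) powr (\<alpha> - 1)))"

definition essinf :: "'a measure \<Rightarrow> ('a \<Rightarrow> real) \<Rightarrow> ereal" where
  "essinf M f = - esssup M (\<lambda>x. - ereal (f x))"

definition esup :: "'a measure \<Rightarrow> ('a \<Rightarrow> real) \<Rightarrow> ereal" where
  "esup M f = esssup M (\<lambda>x. ereal (f x))"

definition Plog :: "real \<Rightarrow> (complex^'n \<Rightarrow> real) \<Rightarrow> bool" where
  "Plog \<alpha> p \<longleftrightarrow> p \<in> borel_measurable (mu_alpha \<alpha>) \<and> essinf (mu_alpha \<alpha>) p > 1 \<and>
     (\<exists>c. \<forall>z\<in>ball 0 1. \<forall>u\<in>ball 0 1. z \<noteq> u \<longrightarrow>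
        \<bar>p z - p u\<bar> \<le> c / ln (exp 1 + 1 / pdist z u))"

definition weight :: "(complex^'n \<Rightarrow> real) \<Rightarrow> bool" where
  "weight w \<longleftrightarrow> w \<in> borel_measurable lebesgue \<and> (\<forall>z. 0 \<le> w z) \<and>
     (\<forall>K. compact K \<and> K \<subseteq> ball 0 1 \<longrightarrow> set_integrable lebesgue K w)"

text \<open>Real power on extended non-negative reals (for positive exponents; top maps to top).\<close>
definition epowr :: "ennreal \<Rightarrow> real \<Rightarrow> ennreal" where
  "epowr x a = (if x = top then top else ennreal (enn2real x powr a))"

definition vnorm :: "'a measure \<Rightarrow> ('a \<Rightarrow> real) \<Rightarrow> ('a \<Rightarrow> ennreal) \<Rightarrow> ennreal" where
  "vnorm M r f = Inf {ennreal l | l. l > 0 \<and> (\<integral>\<^sup>+ z. epowr (f z / ennreal l) (r z) \<partial>M) \<le> 1}"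

definition wmeas :: "real \<Rightarrow> (complex^'n \<Rightarrow> real) \<Rightarrow> (complex^'n) set \<Rightarrow> ennreal" where
  "wmeas \<alpha> w B = (\<integral>\<^sup>+ z\<in>B. ennreal (w z) \<partial>mu_alpha \<alpha>)"

definition winv :: "(complex^'n \<Rightarrow> real) \<Rightarrow> complex^'n \<Rightarrow> ennreal" where
  "winv w z = (if w z = 0 then top else ennreal (1 / w z))"

definition harm_mean :: "real \<Rightarrow> (complex^'n \<Rightarrow> real) \<Rightarrow> (complex^'n) set \<Rightarrow> real" where
  "harm_mean \<alpha> p B = inverse ((1 / measure (mu_alpha \<alpha>) B) *
                        (LINT z:B|mu_alpha \<alpha>. 1 / p z))"

definition conj_exp :: "(complex^'n \<Rightarrow> real) \<Rightarrow> complex^'n \<Rightarrow> real" where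
  "conj_exp p z = p z / (p z - 1)"

definition Bplus_const :: "real \<Rightarrow> (complex^'n \<Rightarrow> real) \<Rightarrow> (complex^'n \<Rightarrow> real) \<Rightarrow> ennreal" where
  "Bplus_const \<alpha> p w = (SUP B\<in>bdry_balls.
      ennreal (measure (mu_alpha \<alpha>) B powr (- harm_mean \<alpha> p B)) * wmeas \<alpha> w B *
      vnorm (mu_alpha \<alpha>) (\<lambda>z. conj_exp p z / p z) (\<lambda>z. indicator B z * winv w z))"

definition Bq_const :: "real \<Rightarrow> real \<Rightarrow> (complex^'n \<Rightarrow> real) \<Rightarrow> ennreal" where
  "Bq_const \<alpha> q w = (SUP B\<in>bdry_balls.
      (wmeas \<alpha> w B / emeasure (mu_alpha \<alpha>) B) *
      epowr ((\<integral>\<^sup>+ z\<in>B. epowr (winv w z) (1 / (q - 1)) \<partial>mu_alpha \<alpha>) / emeasure (mu_alpha \<alpha>) B)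
            (q - 1))"

end

theory Submission
  imports Defs
begin

text \<open>
  A boundary pseudo-ball B of radius r contains a Euclidean ball of radius min(r,1)/16 lying at
  distance at least min(r,1)/16 from the sphere, so mu(B) >= c min(r,1)^N; by the log-Hoelder
  condition, p oscillates on B by at most c/ln(e + 1/r). Together, mu(B)^(p_B - p(z)) is bounded
  uniformly in B and z in B, i.e. mu(B)^((p_B - 1)/(p(z) - 1)) <= C0 mu(B).
  Let l be admissible for the Luxemburg norm of w^(-1) on B with exponent p'/p = 1/(p - 1).
  As s = 1/(q - 1) <= 1/(p(z) - 1), splitting x^s <= t^s + t^(s - r) x^r at the level
  t = mu(B)^(1 - p_B) gives  int_B w^(-s) <= (1 + C0) mu(B)^(1 + (1 - p_B) s) l^s,  which
  rearranges to the B_q average over B being at most (1 + C0)^(q - 1) times the B+ quantity of B.\<close>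

section \<open>The weighted measure\<close>

lemma sets_mu_alpha [simp, measurable_cong]: "sets (mu_alpha a) = sets lebesgue"
  by (simp add: mu_alpha_def)

lemma space_mu_alpha [simp]: "space (mu_alpha a) = UNIV"
  by (simp add: mu_alpha_def)

lemma mu_alpha_density_measurable [measurable]:
  "(\<lambda>z::'a::euclidean_space. indicator (ball 0 1) z * ennreal ((1 - (norm z)\<^sup>2) powr (a - 1)))
     \<in> borel_measurable lebesgue"
proof -
  have [measurable]: "ball (0::'a) 1 \<in> sets borel" by (simp add: borel_open)
  show ?thesis by (intro measurable_completion) measurable
qed

lemma emeasure_mu_alpha:
  "A \<in> sets lebesgue \<Longrightarrow> emeasure (mu_alpha a) A =
     (\<integral>\<^sup>+ z. indicator (ball 0 1) z * ennreal ((1 - (norm z)\<^sup>2) powr (a - 1)) * indicator A z \<partial>lebesgue)"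
  unfolding mu_alpha_def by (subst emeasure_density) (auto simp: nn_integral_set_ennreal)

lemma powr_le_on_unit_interval:
  fixes t x b :: real
  assumes "0 < t" "t \<le> x" "x \<le> 1"
  shows "x powr b \<le> t powr (min 0 b)"
proof (cases "b \<ge> 0")
  case True
  then have "x powr b \<le> 1 powr b" using assms by (intro powr_mono2) auto
  then show ?thesis using True assms by simp
next
  case False
  then show ?thesis using assms by (simp add: powr_mono2')
qed

lemma powr_ge_on_unit_interval:
  fixes t x b :: real
  assumes "0 < t" "t \<le> x" "x \<le> 1"
  shows "t powr (max 0 b) \<le> x powr b"
proof (cases "b \<ge> 0")
  case True
  then show ?thesis using assms by (simp add: powr_mono2)
next
  case False
  then have "1 powr b \<le> x powr b" using assms by (intro powr_mono2') auto
  then show ?thesis using False by simp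
qed

lemma one_minus_norm_le_one_minus_norm_sq:
  fixes z :: "'a::real_normed_vector"
  assumes "norm z \<le> 1"
  shows "1 - norm z \<le> 1 - (norm z)\<^sup>2"
  using assms by (simp add: power2_eq_square mult_left_le_one_le)

definition dyadic_annulus :: "nat \<Rightarrow> 'a::real_normed_vector set" where
  "dyadic_annulus k = ball 0 (1 - (1/2)^(k+1)) - ball 0 (1 - (1/2)^k)"

lemma dyadic_annulus_sets [measurable]:
  "dyadic_annulus k \<in> sets (lebesgue :: 'a::euclidean_space measure)"
  by (simp add: dyadic_annulus_def)

lemma in_dyadic_annulus:
  fixes z :: "'a::real_normed_vector"
  assumes "norm z < 1"
  obtains k where "z \<in> dyadic_annulus k" "(1/2)^(k+1) < 1 - norm z"
proof -
  define k where "k = nat \<lfloor>log 2 (1 / (1 - norm z))\<rfloor>"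
  have lg: "log 2 (1 / (1 - norm z)) \<ge> 0" using assms by simp
  have "2 powr real k \<le> 1 / (1 - norm z)"
    using lg assms unfolding k_def by (simp add: le_log_iff flip: le_log_iff)
  then have lo: "1 - norm z \<le> (1/2)^k"
    using assms by (simp add: powr_realpow divide_simps power_one_over) (metis mult.commute)
  have "1 / (1 - norm z) < 2 powr (real k + 1)"
    using lg assms unfolding k_def by (simp add: log_less_iff flip: log_less_iff)
  moreover have "2 powr (real k + 1) = 2^(k+1)" by (simp add: powr_add powr_realpow)
  ultimately have hi: "(1/2)^(k+1) < 1 - norm z"
    using assms by (simp add: divide_simps power_one_over) (metis mult.commute)
  show ?thesis
    using lo hi by (intro that[of k]) (auto simp: dyadic_annulus_def)
qed

lemma emeasure_dyadic_annulus_le: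
  "emeasure lebesgue (dyadic_annulus k :: 'a::euclidean_space set)
     \<le> ennreal (measure lebesgue (ball (0::'a) 1) * DIM('a) * (1/2)^k)"
proof -
  define V where "V = measure lebesgue (ball (0::'a) 1)"
  define r1 :: real where "r1 = 1 - (1/2)^(k+1)"
  define r0 :: real where "r0 = 1 - (1/2)^k"
  have "(1/2::real)^k \<le> 1" by (simp add: power_le_one)
  then have r0: "0 \<le> r0" "r0 \<le> 1" and r1: "0 \<le> r1" "r1 \<le> 1"
    unfolding r0_def r1_def by simp_all
  have vol: "emeasure lebesgue (ball (0::'a) r) = ennreal (r ^ DIM('a) * V)" if "r \<ge> 0" for r
    using emeasure_lebesgue_ball_conv_unit_ball[OF that, of 0] that
    by (simp add: V_def emeasure_eq_measure2 ennreal_mult')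
  have "ball (0::'a) r0 \<subseteq> ball 0 r1"
    unfolding r0_def r1_def by (intro subset_ball) (simp add: power_one_over divide_simps)
  then have "emeasure lebesgue (dyadic_annulus k :: 'a set)
      = emeasure lebesgue (ball (0::'a) r1) - emeasure lebesgue (ball (0::'a) r0)"
    unfolding dyadic_annulus_def r0_def[symmetric] r1_def[symmetric]
    using emeasure_bounded_finite[of "ball (0::'a) r0"] by (intro emeasure_Diff) auto
  also have "\<dots> = ennreal (r1 ^ DIM('a) * V) - ennreal (r0 ^ DIM('a) * V)"
    using r0 r1 by (simp only: vol)
  also have "\<dots> = ennreal (r1 ^ DIM('a) * V - r0 ^ DIM('a) * V)"
    using r0 by (simp add: V_def ennreal_minus)
  also have "\<dots> \<le> ennreal (V * DIM('a) * (1/2)^k)"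
  proof (rule ennreal_leI)
    have "r1 ^ DIM('a) \<le> 1" using r1 by (simp add: power_le_one)
    moreover have "1 - DIM('a) * (1 - r0) \<le> r0 ^ DIM('a)"
      using Bernoulli_inequality[of "r0 - 1" "DIM('a)"] r0 by (simp add: algebra_simps)
    ultimately have "(r1 ^ DIM('a) - r0 ^ DIM('a)) * V \<le> (DIM('a) * (1/2)^k) * V"
      unfolding r0_def by (intro mult_right_mono) (auto simp: V_def)
    then show "r1 ^ DIM('a) * V - r0 ^ DIM('a) * V \<le> V * DIM('a) * (1/2)^k"
      by (simp add: algebra_simps)
  qed
  finally show ?thesis by (simp add: V_def)
qed

lemma mu_alpha_density_le_dyadic:
  fixes z :: "'a::real_normed_vector" and a :: real
  shows "indicator (ball 0 1) z * ennreal ((1 - (norm z)\<^sup>2) powr (a - 1))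
     \<le> (\<Sum>k. ennreal (2 powr ((k + 1) * max 0 (1 - a))) * indicator (dyadic_annulus k) z)"
proof (cases "norm z < 1")
  case True
  then obtain k where k: "z \<in> dyadic_annulus k" "(1/2)^(k+1) < 1 - norm z"
    by (rule in_dyadic_annulus)
  have "(1/2::real)^(k+1) \<le> 1 - (norm z)\<^sup>2"
    using k(2) True one_minus_norm_le_one_minus_norm_sq[of z] by simp
  then have "(1 - (norm z)\<^sup>2) powr (a - 1) \<le> ((1/2)^(k+1)) powr (min 0 (a - 1))"
    by (intro powr_le_on_unit_interval) auto
  also have "\<dots> = (2 powr (- real (k + 1))) powr (min 0 (a - 1))"
    by (simp only: powr_minus powr_realpow[of 2] power_one_over inverse_eq_divide)
  also have "\<dots> = 2 powr ((k + 1) * max 0 (1 - a))"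
    by (simp add: powr_powr) (simp add: min_def max_def algebra_simps)
  finally have "indicator (ball 0 1) z * ennreal ((1 - (norm z)\<^sup>2) powr (a - 1))
      \<le> ennreal (2 powr ((k + 1) * max 0 (1 - a))) * indicator (dyadic_annulus k) z"
    using True k(1) by (simp add: ennreal_leI)
  also have "\<dots> \<le> (\<Sum>k. ennreal (2 powr ((k + 1) * max 0 (1 - a))) * indicator (dyadic_annulus k) z)"
    using sum_le_suminf[OF summableI, of "{k}"] by simp
  finally show ?thesis .
qed simp

lemma finite_measure_mu_alpha:
  assumes "a > 0"
  shows "finite_measure (mu_alpha a :: (complex^'n) measure)"
proof
  define \<gamma> where "\<gamma> = max 0 (1 - a)"
  define c where "c = measure lebesgue (ball (0::complex^'n) 1) * DIM(complex^'n)"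
  have c: "c \<ge> 0" by (simp add: c_def)
  have term_eq: "2 powr ((k + 1) * \<gamma>) * (c * (1/2)^k) = (2 powr \<gamma> * c) * (2 powr (\<gamma> - 1)) ^ k"
    for k :: nat
    by (simp add: powr_diff powr_realpow[symmetric] powr_powr power_divide power_mult_distrib
        powr_add field_simps flip: powr_realpow)
  have "emeasure (mu_alpha a) (UNIV :: (complex^'n) set)
      = (\<integral>\<^sup>+ z. indicator (ball 0 1) z * ennreal ((1 - (norm z)\<^sup>2) powr (a - 1))
          \<partial>(lebesgue :: (complex^'n) measure))"
    by (subst emeasure_mu_alpha) auto
  also have "\<dots> \<le> (\<integral>\<^sup>+ z. (\<Sum>k. ennreal (2 powr ((k + 1) * \<gamma>)) * indicator (dyadic_annulus k) z)
      \<partial>(lebesgue :: (complex^'n) measure))"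
    unfolding \<gamma>_def by (intro nn_integral_mono mu_alpha_density_le_dyadic)
  also have "\<dots> = (\<Sum>k. ennreal (2 powr ((k + 1) * \<gamma>)) *
      emeasure lebesgue (dyadic_annulus k :: (complex^'n) set))"
    by (simp add: nn_integral_suminf nn_integral_cmult_indicator del: emeasure_completion)
  also have "\<dots> \<le> (\<Sum>k. ennreal ((2 powr \<gamma> * c) * (2 powr (\<gamma> - 1)) ^ k))"
  proof (intro suminf_le summableI)
    fix k :: nat
    have "ennreal (2 powr (real (k + 1) * \<gamma>)) * emeasure lebesgue (dyadic_annulus k :: (complex^'n) set)
        \<le> ennreal (2 powr ((k + 1) * \<gamma>)) * ennreal (c * (1/2)^k)"
      unfolding c_def by (intro mult_left_mono emeasure_dyadic_annulus_le) simp
    also have "\<dots> = ennreal ((2 powr \<gamma> * c) * (2 powr (\<gamma> - 1)) ^ k)"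
      using c by (simp add: term_eq[symmetric] ennreal_mult add.commute)
    finally show "ennreal (2 powr (real (k + 1) * \<gamma>)) *
        emeasure lebesgue (dyadic_annulus k :: (complex^'n) set)
        \<le> ennreal ((2 powr \<gamma> * c) * (2 powr (\<gamma> - 1)) ^ k)" .
  qed
  also have "\<dots> < \<infinity>"
  proof -
    have "2 powr (\<gamma> - 1) < 1" using assms by (simp add: \<gamma>_def powr_less_one)
    then have "summable (\<lambda>k. (2 powr \<gamma> * c) * (2 powr (\<gamma> - 1)) ^ k)"
      by (intro summable_mult summable_geometric) simp
    then show ?thesis using c by (subst suminf_ennreal2) auto
  qed
  finally show "emeasure (mu_alpha a) (space (mu_alpha a :: (complex^'n) measure)) \<noteq> \<infinity>"
    by simp
qed

section \<open>Pseudo-balls\<close>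

lemma norm_cinner_le: "cmod (cinner x y) \<le> norm x * norm y"
proof -
  have "cmod (cinner x y) \<le> (\<Sum>i\<in>UNIV. cmod (x$i) * cmod (y$i))"
    unfolding cinner_def by (rule order_trans[OF norm_sum]) (simp add: norm_mult)
  also have "\<dots> \<le> L2_set (\<lambda>i. cmod (x$i)) UNIV * L2_set (\<lambda>i. cmod (y$i)) UNIV"
    using L2_set_mult_ineq[of "\<lambda>i. cmod (x$i)" "\<lambda>i. cmod (y$i)" UNIV] by simp
  also have "\<dots> = norm x * norm y" by (simp add: norm_vec_def)
  finally show ?thesis .
qed

lemma cinner_scaleR: "cinner (a *\<^sub>R x) (b *\<^sub>R y) = complex_of_real (a * b) * cinner x y"
  unfolding cinner_def vector_scaleR_component sum_distrib_left
  by (intro sum.cong refl) (simp add: scaleR_conv_of_real)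

lemma cinner_diff_right: "cinner x (y - u) = cinner x y - cinner x u"
  by (simp add: cinner_def algebra_simps sum_subtractf)

lemma power2_norm_vec_complex: "(norm (x::complex^'n))\<^sup>2 = (\<Sum>i\<in>UNIV. (cmod (x$i))\<^sup>2)"
  by (simp add: norm_vec_def L2_set_def sum_nonneg)

lemma cinner_self: "cinner x x = complex_of_real ((norm x)\<^sup>2)"
  unfolding power2_norm_vec_complex cinner_def of_real_sum
  by (intro sum.cong refl) (metis complex_norm_square)

lemma power2_norm_diff_cinner: "(norm (x - y))\<^sup>2 = (norm x)\<^sup>2 + (norm y)\<^sup>2 - 2 * Re (cinner x y)"
proof -
  have "(cmod (a - b))\<^sup>2 = (cmod a)\<^sup>2 + (cmod b)\<^sup>2 - 2 * Re (a * cnj b)" for a b :: complex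
    unfolding cmod_power2 by (simp add: power2_diff algebra_simps)
  then show ?thesis
    unfolding power2_norm_vec_complex cinner_def Re_sum
    by (simp add: sum.distrib sum_subtractf sum_distrib_left)
qed

lemma pdist_nonneg: "pdist z u \<ge> 0"
  by (simp add: pdist_def)

lemma pdist_pos:
  assumes "z \<noteq> u"
  shows "pdist z u > 0"
proof (rule ccontr)
  assume "\<not> pdist z u > 0"
  then have "pdist z u = 0" using pdist_nonneg[of z u] by simp
  moreover have "z \<noteq> 0 \<and> u \<noteq> 0"
    using \<open>pdist z u = 0\<close> assms by (auto simp: pdist_def split: if_splits)
  ultimately have eq: "norm z = norm u"
    and "cmod (1 - cinner z u / complex_of_real (norm z * norm u)) = 0"
    by (simp_all add: pdist_def add_nonneg_eq_0_iff del: of_real_mult)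
  then have "cinner z u = complex_of_real (norm z * norm u)"
    by simp
  then have "Re (cinner z u) = (norm z)\<^sup>2"
    using eq by (simp add: power2_eq_square)
  then have "(norm (z - u))\<^sup>2 = 0"
    using eq by (simp add: power2_norm_diff_cinner)
  then show False using assms by simp
qed

lemma pdist_le_norm_sgn_diff:
  assumes "z \<noteq> 0" "u \<noteq> 0"
  shows "pdist z u \<le> \<bar>norm z - norm u\<bar> + norm (sgn z - sgn u)"
proof -
  have "cinner (sgn z) (sgn u) = cinner z u / complex_of_real (norm z * norm u)"
    unfolding sgn_div_norm divide_inverse_commute[symmetric]
    by (simp add: cinner_scaleR[of "1 / norm z" _ "1 / norm u", simplified] field_simps)
  moreover have "cinner (sgn z) (sgn z) = 1"
    using assms(1) by (simp add: cinner_self norm_sgn)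
  ultimately have "1 - cinner z u / complex_of_real (norm z * norm u) = cinner (sgn z) (sgn z - sgn u)"
    by (simp add: cinner_diff_right)
  then have "cmod (1 - cinner z u / complex_of_real (norm z * norm u)) \<le> norm (sgn z - sgn u)"
    using norm_cinner_le[of "sgn z" "sgn z - sgn u"] assms(1) by (simp add: norm_sgn)
  then show ?thesis using assms by (simp add: pdist_def del: of_real_mult)
qed

lemma norm_sgn_diff_le:
  fixes x y :: "'a::real_normed_vector"
  assumes "x \<noteq> 0" "y \<noteq> 0"
  shows "norm (sgn x - sgn y) \<le> 2 * norm (x - y) / norm x"
proof -
  have nx: "norm x > 0" "norm y > 0" using assms by auto
  have "sgn x - sgn y = inverse (norm x) *\<^sub>R (x - y) + (inverse (norm x) - inverse (norm y)) *\<^sub>R y"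
    by (simp add: sgn_div_norm algebra_simps)
  then have "norm (sgn x - sgn y)
      \<le> norm (inverse (norm x) *\<^sub>R (x - y)) + norm ((inverse (norm x) - inverse (norm y)) *\<^sub>R y)"
    by (simp only: norm_triangle_ineq)
  also have "norm (inverse (norm x) *\<^sub>R (x - y)) = norm (x - y) / norm x"
    by (simp add: divide_inverse_commute del: scaleR_right_diff_distrib)
  also have "norm ((inverse (norm x) - inverse (norm y)) *\<^sub>R y) = \<bar>norm y - norm x\<bar> / norm x"
    using nx by (simp add: field_simps abs_div)
  also have "\<bar>norm y - norm x\<bar> \<le> norm (x - y)"
    using norm_triangle_ineq3[of y x] by (simp add: norm_minus_commute)
  finally show ?thesis using nx by (simp add: divide_right_mono add_divide_distrib[symmetric])
qed

lemma pdist_measurable [measurable]: "pdist z \<in> borel_measurable borel"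
proof -
  have [measurable]: "(\<lambda>x::complex^'n. cnj (x $ i)) \<in> borel_measurable borel" for i
    by (intro borel_measurable_continuous_onI continuous_intros)
  have [measurable]: "{u::complex^'n \<in> space borel. z \<noteq> 0 \<and> u \<noteq> 0} \<in> sets borel"
    by (cases "z = 0") (simp_all add: Collect_neg_eq[symmetric] borel_open open_Compl)
  show ?thesis unfolding pdist_def[abs_def] cinner_def by measurable
qed

lemma pball_sets [measurable]: "pball z r \<in> sets lebesgue"
proof -
  have [measurable]: "ball (0::complex^'n) 1 \<in> sets borel" by (simp add: borel_open)
  have "pball z r = {u \<in> space borel. u \<in> ball 0 1 \<and> pdist z u < r}"
    by (auto simp: pball_def)
  also have "\<dots> \<in> sets borel" by measurable
  finally have "pball z r \<in> sets lborel" by simp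
  then show ?thesis by (rule sets_completionI_sets)
qed

lemma ball_in_bdry_pball:
  fixes z :: "complex^'n"
  assumes "norm z < 1" "r > 1 - norm z"
  obtains w0 where "ball w0 (min r 1 / 16) \<subseteq> pball z r"
    and "ball w0 (min r 1 / 16) \<subseteq> cball 0 (1 - min r 1 / 16)"
proof -
  define \<delta> where "\<delta> = min r 1 / 16"
  have d: "0 < \<delta>" "16 * \<delta> \<le> r" "16 * \<delta> \<le> 1" using assms by (auto simp: \<delta>_def)
  obtain e :: "complex^'n" where e: "norm e = 1" "z \<noteq> 0 \<Longrightarrow> e = sgn z"
  proof (cases "z = 0")
    case True
    obtain b :: "complex^'n" where "b \<in> Basis" using nonempty_Basis by blast
    then show ?thesis using True that[of b] by simp
  qed (use that[of "sgn z"] in \<open>simp add: norm_sgn\<close>)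
  \<comment> \<open>Centre on the ray through z, away from the origin and from the sphere, so that on the
    ball both the radius and the direction move by O(\<delta>).\<close>
  define t where "t = (if norm z \<ge> 1/2 then min (norm z) (1 - 2 * \<delta>) else 1/2)"
  have t: "1/2 \<le> t" "t \<le> 1 - 2 * \<delta>" "\<bar>norm z - t\<bar> + 5 * \<delta> < r"
    using assms d by (auto simp: t_def min_def)
  define w0 where "w0 = t *\<^sub>R e"
  have nw0: "norm w0 = t" using t e by (simp add: w0_def)
  have norm_u: "\<bar>norm u - t\<bar> < \<delta>" if "u \<in> ball w0 \<delta>" for u
    using that norm_triangle_ineq3[of u w0] nw0 by (simp add: dist_norm norm_minus_commute)
  have "ball w0 \<delta> \<subseteq> pball z r"
  proof
    fix u assume u: "u \<in> ball w0 \<delta>"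
    have nu: "norm u < 1" "u \<noteq> 0" using norm_u[OF u] t d by auto
    have "pdist z u < r"
    proof (cases "z = 0")
      case True
      then show ?thesis using nu assms by (simp add: pdist_def)
    next
      case False
      have "sgn w0 = sgn z" using False t e by (simp add: w0_def sgn_scaleR sgn_div_norm field_simps)
      then have "norm (sgn z - sgn u) \<le> 2 * norm (w0 - u) / t"
        using norm_sgn_diff_le[of w0 u] nw0 nu t by force
      also have "\<dots> \<le> 2 * \<delta> / (1/2)"
        using u t d by (intro frac_le) (auto simp: dist_norm)
      finally have "pdist z u \<le> \<bar>norm z - norm u\<bar> + 4 * \<delta>"
        using pdist_le_norm_sgn_diff[OF False nu(2)] by simp
      then show ?thesis using norm_u[OF u] t by linarith
    qed
    then show "u \<in> pball z r" using nu by (simp add: pball_def)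
  qed
  moreover have "ball w0 \<delta> \<subseteq> cball 0 (1 - \<delta>)"
    using norm_u t by (fastforce simp: abs_less_iff)
  ultimately show ?thesis using that unfolding \<delta>_def by blast
qed

lemma measure_bdry_pball_ge:
  fixes z :: "complex^'n" and a :: real
  assumes "a > 0" "norm z < 1" "r > 1 - norm z"
  shows "measure lebesgue (ball (0::complex^'n) 1) * (min r 1 / 16) powr (DIM(complex^'n) + max 0 (a - 1))
    \<le> measure (mu_alpha a) (pball z r)"
proof -
  define \<delta> where "\<delta> = min r 1 / 16"
  define V where "V = measure lebesgue (ball (0::complex^'n) 1)"
  have d: "0 < \<delta>" "\<delta> \<le> 1" using assms by (auto simp: \<delta>_def)
  obtain w0 :: "complex^'n" where w0: "ball w0 \<delta> \<subseteq> pball z r" "ball w0 \<delta> \<subseteq> cball 0 (1 - \<delta>)"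
    using ball_in_bdry_pball[OF assms(2,3)] unfolding \<delta>_def by blast
  have density_ge: "ennreal (\<delta> powr (max 0 (a - 1))) * indicator (ball w0 \<delta>) u
      \<le> indicator (ball 0 1) u * ennreal ((1 - (norm u)\<^sup>2) powr (a - 1)) * indicator (ball w0 \<delta>) u" for u
  proof (cases "u \<in> ball w0 \<delta>")
    case True
    then have nu: "norm u \<le> 1 - \<delta>" using w0(2) by auto
    then have "\<delta> \<le> 1 - (norm u)\<^sup>2" using one_minus_norm_le_one_minus_norm_sq[of u] d by simp
    then show ?thesis
      using True nu d powr_ge_on_unit_interval[of \<delta> "1 - (norm u)\<^sup>2" "a - 1"] by simp
  qed simp
  have "ennreal (V * \<delta> powr (DIM(complex^'n) + max 0 (a - 1)))
      = ennreal (\<delta> powr (max 0 (a - 1))) * emeasure lebesgue (ball w0 \<delta>)"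
    using d emeasure_lebesgue_ball_conv_unit_ball[of \<delta> w0] powr_realpow[of \<delta> "DIM(complex^'n)"]
    by (simp add: V_def powr_add powr_realpow emeasure_eq_measure2 ennreal_mult' mult_ac
        del: emeasure_completion)
  also have "\<dots> = (\<integral>\<^sup>+ u. ennreal (\<delta> powr (max 0 (a - 1))) * indicator (ball w0 \<delta>) u \<partial>lebesgue)"
    by (simp add: nn_integral_cmult_indicator del: emeasure_completion)
  also have "\<dots> \<le> emeasure (mu_alpha a) (ball w0 \<delta>)"
    by (subst emeasure_mu_alpha) (auto intro!: nn_integral_mono density_ge)
  also have "\<dots> \<le> emeasure (mu_alpha a) (pball z r)"
    using w0(1) by (intro emeasure_mono) auto
  also have "\<dots> = ennreal (measure (mu_alpha a) (pball z r))"
    by (rule finite_measure.emeasure_eq_measure[OF finite_measure_mu_alpha[OF assms(1)]])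
  finally show ?thesis by (simp add: \<delta>_def V_def)
qed

section \<open>Log-Hoelder exponents on boundary pseudo-balls\<close>

lemma AE_greater_of_essinf_greater:
  assumes "ereal a < essinf M f"
  shows "AE x in M. a < f x"
  using esssup_AE[of "\<lambda>x. - ereal (f x)" M]
proof eventually_elim
  case (elim x)
  then have "essinf M f \<le> ereal (f x)" unfolding essinf_def by (simp add: ereal_uminus_le_reorder)
  with assms have "ereal a < ereal (f x)" by (rule less_le_trans)
  then show ?case by simp
qed

lemma AE_less_of_esup_less:
  assumes "esup M f < ereal b"
  shows "AE x in M. f x < b"
  using esssup_AE[of "\<lambda>x. ereal (f x)" M]
proof eventually_elim
  case (elim x)
  then have "ereal (f x) \<le> esup M f" by (simp add: esup_def)
  with assms have "ereal (f x) < ereal b" by (rule le_less_trans[rotated])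
  then show ?case by simp
qed

lemma one_le_ln_exp1_add: "0 \<le> (x::real) \<Longrightarrow> 1 \<le> ln (exp 1 + x)"
  using ln_le_cancel_iff[of "exp 1" "exp 1 + x"] by (simp add: add_pos_nonneg)

lemma Plog_nonneg_constant:
  assumes "Plog \<alpha> p"
  obtains c where "0 \<le> c"
    and "\<forall>z\<in>ball 0 1. \<forall>u\<in>ball 0 1. z \<noteq> u \<longrightarrow> \<bar>p z - p u\<bar> \<le> c / ln (exp 1 + 1 / pdist z u)"
proof -
  obtain c where c: "\<forall>z\<in>ball 0 1. \<forall>u\<in>ball 0 1. z \<noteq> u \<longrightarrow> \<bar>p z - p u\<bar> \<le> c / ln (exp 1 + 1 / pdist z u)"
    using assms by (auto simp: Plog_def)
  have le: "c / ln (exp 1 + 1 / pdist z u) \<le> max c 0 / ln (exp 1 + 1 / pdist z u)" for z u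
    using one_le_ln_exp1_add[of "1 / pdist z u"] pdist_nonneg[of z u] by (intro divide_right_mono) auto
  show ?thesis
  proof (rule that[of "max c 0"])
    show "\<forall>z\<in>ball 0 1. \<forall>u\<in>ball 0 1. z \<noteq> u \<longrightarrow>
        \<bar>p z - p u\<bar> \<le> max c 0 / ln (exp 1 + 1 / pdist z u)"
      using c by (blast intro: order_trans[OF _ le])
  qed simp
qed

lemma abs_diff_le_on_pball:
  assumes "0 \<le> c"
    and hold: "\<forall>z\<in>ball 0 1. \<forall>u\<in>ball 0 1. z \<noteq> u \<longrightarrow> \<bar>p z - p u\<bar> \<le> c / ln (exp 1 + 1 / pdist z u)"
    and z0: "z0 \<in> ball 0 1" and u: "u \<in> pball z0 r"
  shows "\<bar>p u - p z0\<bar> \<le> c / ln (exp 1 + 1 / r)"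
proof -
  have u1: "u \<in> ball 0 1" and lt: "pdist z0 u < r" using u by (auto simp: pball_def)
  have L: "1 \<le> ln (exp 1 + 1 / r)"
    using lt pdist_nonneg[of z0 u] by (intro one_le_ln_exp1_add) simp
  show ?thesis
  proof (cases "u = z0")
    case False
    have pos: "0 < pdist z0 u" using False pdist_pos[of z0 u] by auto
    then have "1 / r \<le> 1 / pdist z0 u" using lt by (intro divide_left_mono) auto
    then have "ln (exp 1 + 1 / r) \<le> ln (exp 1 + 1 / pdist z0 u)"
      using pos lt by (subst ln_le_cancel_iff) (auto intro: add_pos_nonneg)
    then have "c / ln (exp 1 + 1 / pdist z0 u) \<le> c / ln (exp 1 + 1 / r)"
      using assms(1) L by (intro divide_left_mono) auto
    moreover have "\<bar>p z0 - p u\<bar> \<le> c / ln (exp 1 + 1 / pdist z0 u)" using hold z0 u1 False by auto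
    ultimately show ?thesis by (simp add: abs_minus_commute)
  qed (use assms(1) L in simp)
qed

lemma set_integral_bounds_AE:
  fixes f :: "'a \<Rightarrow> real"
  assumes M: "finite_measure M" and A [measurable]: "A \<in> sets M"
    and f [measurable]: "f \<in> borel_measurable M"
    and bounds: "AE x in M. x \<in> A \<longrightarrow> a \<le> f x \<and> f x \<le> b"
  shows "measure M A * a \<le> (LINT x:A|M. f x)" and "(LINT x:A|M. f x) \<le> measure M A * b"
proof -
  have fin: "emeasure M A < \<infinity>"
    using finite_measure.emeasure_finite[OF M, of A] by (simp add: less_top)
  then have const: "set_integrable M A (\<lambda>x. c)" and const_eq: "(LINT x:A|M. c) = measure M A * c"
    for c :: real
    by (simp_all add: set_integrable_def set_integral_const)
  have "set_integrable M A f"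
    unfolding set_integrable_def
    by (rule finite_measure.integrable_const_bound[OF M, where B = "max \<bar>a\<bar> \<bar>b\<bar>"])
       (use bounds in \<open>auto elim!: eventually_mono simp: indicator_def\<close>)
  then show "measure M A * a \<le> (LINT x:A|M. f x)" and "(LINT x:A|M. f x) \<le> measure M A * b"
    using bounds const const_eq
    by (auto simp flip: const_eq intro!: set_integral_mono_AE elim!: eventually_mono)
qed

lemma harm_mean_bounds:
  assumes "\<alpha> > 0" "p \<in> borel_measurable (mu_alpha \<alpha>)" "B \<in> sets lebesgue"
    and "measure (mu_alpha \<alpha>) B > 0" "0 < a" "a \<le> b"
    and "AE u in mu_alpha \<alpha>. u \<in> B \<longrightarrow> a \<le> p u \<and> p u \<le> b"
  shows "a \<le> harm_mean \<alpha> p B" and "harm_mean \<alpha> p B \<le> b"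
proof -
  define m where "m = measure (mu_alpha \<alpha>) B"
  define I where "I = (LINT u:B|mu_alpha \<alpha>. 1 / p u)"
  have "AE u in mu_alpha \<alpha>. u \<in> B \<longrightarrow> 1 / b \<le> 1 / p u \<and> 1 / p u \<le> 1 / a"
    using assms(7) by eventually_elim (use assms(5) in \<open>auto intro: divide_left_mono\<close>)
  from set_integral_bounds_AE[OF finite_measure_mu_alpha[OF assms(1)] _ _ this] assms(2,3)
  have "m * (1 / b) \<le> I" "I \<le> m * (1 / a)"
    unfolding m_def I_def by simp_all
  moreover have "m > 0" using assms(4) unfolding m_def by auto
  moreover from calculation have "I > 0"
    using assms(5,6) by (smt (verit) divide_pos_pos mult_pos_pos)
  moreover have "harm_mean \<alpha> p B = m / I"
    by (simp add: harm_mean_def m_def I_def)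
  ultimately show "a \<le> harm_mean \<alpha> p B" and "harm_mean \<alpha> p B \<le> b"
    using assms(5,6) by (auto simp: pos_le_divide_eq pos_divide_le_eq field_simps)
qed

lemma powr_exponent_ratio_le:
  fixes m M K P Q \<eta> x y :: real
  assumes m: "0 < m" "m \<le> M" "ln (1 / m) \<le> K"
    and P: "1 < P" "P < x" and \<eta>: "0 \<le> \<eta>" and y: "x - \<eta> \<le> y" "P \<le> y" "y \<le> Q"
  shows "m powr ((y - 1) / (x - 1)) \<le> max (M powr ((Q - P) / (P - 1))) (exp (\<eta> / (P - 1) * K)) * m"
proof -
  define e where "e = (y - x) / (x - 1)"
  have "m powr e \<le> max (M powr ((Q - P) / (P - 1))) (exp (\<eta> / (P - 1) * K))"
  proof (cases "m \<ge> 1")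
    case True
    have "e \<le> (Q - P) / (P - 1)"
    proof (cases "y \<ge> x")
      case True
      then show ?thesis unfolding e_def using P y by (intro frac_le) auto
    next
      case False
      then have "e \<le> 0" unfolding e_def using P by (simp add: divide_nonpos_pos)
      also have "0 \<le> (Q - P) / (P - 1)" using P y by simp
      finally show ?thesis .
    qed
    then have "m powr e \<le> m powr ((Q - P) / (P - 1))" using True by (intro powr_mono) auto
    also have "\<dots> \<le> M powr ((Q - P) / (P - 1))" using m P y by (intro powr_mono2) auto
    finally show ?thesis by simp
  next
    case False
    have "- (\<eta> / (P - 1)) \<le> - (\<eta> / (x - 1))" using P \<eta> by (simp add: frac_le)
    also have "\<dots> \<le> e" unfolding e_def using P y divide_right_mono[of "- \<eta>" "y - x" "x - 1"] by simp
    finally have "m powr e \<le> m powr (- (\<eta> / (P - 1)))" using False m by (intro powr_mono') auto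
    also have "\<dots> = exp (\<eta> / (P - 1) * ln (1 / m))" using m by (simp add: powr_def ln_div)
    also have "\<dots> \<le> exp (\<eta> / (P - 1) * K)" using m P \<eta> by (simp add: mult_left_mono divide_right_mono)
    finally show ?thesis by simp
  qed
  moreover have "(y - 1) / (x - 1) = e + 1" using P by (simp add: e_def field_simps)
  ultimately show ?thesis using m by (simp add: powr_add mult_right_mono)
qed

lemma bdry_pball_measure_lower_bound:
  assumes "\<alpha> > 0"
  obtains A N where "0 \<le> A" "0 \<le> N"
    and "\<And>z r. norm (z::complex^'n) < 1 \<Longrightarrow> r > 1 - norm z \<Longrightarrow>
      0 < measure (mu_alpha \<alpha>) (pball z r) \<and>
      ln (1 / measure (mu_alpha \<alpha>) (pball z r)) \<le> A + N * ln (exp 1 + 1 / r)"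
proof
  define V where "V = measure lebesgue (ball (0::complex^'n) 1)"
  define N where "N = DIM(complex^'n) + max 0 (\<alpha> - 1)"
  have V: "V > 0" using content_ball_pos[of 1 "0::complex^'n"] by (simp add: V_def)
  show "0 \<le> \<bar>ln V\<bar> + N * ln 16" "0 \<le> N" by (simp_all add: N_def)
  fix z :: "complex^'n" and r
  assume z: "norm z < 1" "r > 1 - norm z"
  define \<rho> where "\<rho> = min r 1"
  have \<rho>: "0 < \<rho>" "\<rho> \<le> 1" using z by (auto simp: \<rho>_def)
  have lb: "0 < V * (\<rho> / 16) powr N" using V \<rho> by simp
  also have "\<dots> \<le> measure (mu_alpha \<alpha>) (pball z r)"
    using measure_bdry_pball_ge[OF assms z] by (simp add: V_def N_def \<rho>_def)
  finally have pos: "0 < measure (mu_alpha \<alpha>) (pball z r)" .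
  have "ln (1 / \<rho>) \<le> ln (exp 1 + 1 / r)"
  proof (cases "r \<ge> 1")
    case False
    then show ?thesis using \<rho> by (simp add: \<rho>_def add_pos_nonneg)
  qed (use one_le_ln_exp1_add[of "1 / r"] in \<open>simp add: \<rho>_def\<close>)
  moreover have "ln (1 / (V * (\<rho> / 16) powr N)) = - ln V + N * ln 16 + N * ln (1 / \<rho>)"
    using V \<rho> by (simp add: ln_div ln_mult ln_powr algebra_simps)
  ultimately have "ln (1 / (V * (\<rho> / 16) powr N)) \<le> \<bar>ln V\<bar> + N * ln 16 + N * ln (exp 1 + 1 / r)"
    using mult_left_mono[of "ln (1 / \<rho>)" "ln (exp 1 + 1 / r)" N] abs_ge_minus_self[of "ln V"]
    by (simp add: N_def)
  moreover have "ln (1 / measure (mu_alpha \<alpha>) (pball z r)) \<le> ln (1 / (V * (\<rho> / 16) powr N))"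
    using lb \<open>V * (\<rho> / 16) powr N \<le> _\<close> by (simp add: frac_le)
  ultimately show "0 < measure (mu_alpha \<alpha>) (pball z r) \<and>
      ln (1 / measure (mu_alpha \<alpha>) (pball z r)) \<le> \<bar>ln V\<bar> + N * ln 16 + N * ln (exp 1 + 1 / r)"
    using pos by simp
qed

lemma measure_bdry_ball_pos:
  assumes "\<alpha> > 0" "B \<in> bdry_balls"
  shows "0 < measure (mu_alpha \<alpha>) B"
proof -
  obtain z r where "B = pball z r" "norm z < 1" "r > 1 - norm z"
    using assms(2) by (auto simp: bdry_balls_def)
  then show ?thesis
    using bdry_pball_measure_lower_bound[OF assms(1)] by metis
qed

lemma AE_mu_alpha_ex:
  assumes "\<alpha> > 0" "AE z in mu_alpha \<alpha>. P (z::complex^'n)"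
  shows "\<exists>z. P z"
proof (rule ccontr)
  assume "\<not> (\<exists>z. P z)"
  with assms(2) have "AE z in mu_alpha \<alpha>. z \<notin> pball (0::complex^'n) 2"
    by (auto elim: eventually_mono)
  then have "pball (0::complex^'n) 2 \<in> null_sets (mu_alpha \<alpha>)"
    by (subst AE_iff_null_sets) auto
  then have "measure (mu_alpha \<alpha>) (pball (0::complex^'n) 2) = 0"
    by (simp add: measure_def null_setsD1)
  moreover have "pball (0::complex^'n) 2 \<in> bdry_balls" by (force simp: bdry_balls_def)
  ultimately show False using measure_bdry_ball_pos[OF assms(1)] by fastforce
qed

lemma powr_harm_mean_exponent_le:
  fixes p :: "complex^'n \<Rightarrow> real"
  assumes \<alpha>: "\<alpha> > 0" and pm: "p \<in> borel_measurable (mu_alpha \<alpha>)" and B: "B \<in> sets lebesgue"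
    and m: "0 < measure (mu_alpha \<alpha>) B" "measure (mu_alpha \<alpha>) B \<le> M"
      "ln (1 / measure (mu_alpha \<alpha>) B) \<le> K"
    and P: "1 < P" "P < p z" "p z < Q" and \<eta>: "0 \<le> \<eta>"
    and bounds: "AE u in mu_alpha \<alpha>. u \<in> B \<longrightarrow> P < p u \<and> p u < Q \<and> p z - \<eta> \<le> p u"
  shows "measure (mu_alpha \<alpha>) B powr ((harm_mean \<alpha> p B - 1) / (p z - 1))
    \<le> max (M powr ((Q - P) / (P - 1))) (exp (\<eta> / (P - 1) * K)) * measure (mu_alpha \<alpha>) B"
proof -
  have "AE u in mu_alpha \<alpha>. u \<in> B \<longrightarrow> max P (p z - \<eta>) \<le> p u \<and> p u \<le> Q"
    using bounds by eventually_elim auto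
  moreover have "0 < max P (p z - \<eta>)" "max P (p z - \<eta>) \<le> Q" using P \<eta> by auto
  ultimately have "max P (p z - \<eta>) \<le> harm_mean \<alpha> p B" "harm_mean \<alpha> p B \<le> Q"
    using harm_mean_bounds[OF \<alpha> pm B m(1)] by (blast, blast)
  then show ?thesis
    using m P \<eta> by (intro powr_exponent_ratio_le) auto
qed

lemma pball_exponent_bound:
  fixes p :: "complex^'n \<Rightarrow> real" and z0 :: "complex^'n" and \<alpha> P Q c A N r :: real
  defines "m \<equiv> measure (mu_alpha \<alpha>) (pball z0 r)"
    and "Mt \<equiv> measure (mu_alpha \<alpha>) (UNIV :: (complex^'n) set)"
  assumes \<alpha>: "\<alpha> > 0" and pm: "p \<in> borel_measurable (mu_alpha \<alpha>)"
    and P: "1 < P" "P < Q" and AE: "AE z in mu_alpha \<alpha>. P < p z \<and> p z < Q"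
    and c: "0 \<le> c"
    and hold: "\<forall>z\<in>ball 0 1. \<forall>u\<in>ball 0 1. z \<noteq> u \<longrightarrow> \<bar>p z - p u\<bar> \<le> c / ln (exp 1 + 1 / pdist z u)"
    and z0: "z0 \<in> ball 0 1" and r: "0 < r" and AN: "0 \<le> A" "0 \<le> N"
    and m: "0 < m" "ln (1 / m) \<le> A + N * ln (exp 1 + 1 / r)"
  shows "AE z in mu_alpha \<alpha>. z \<in> pball z0 r \<longrightarrow>
    m powr ((harm_mean \<alpha> p (pball z0 r) - 1) / (p z - 1))
      \<le> max (Mt powr ((Q - P) / (P - 1))) (exp (2 * c / (P - 1) * (A + N))) * m"
proof -
  define L where "L = ln (exp 1 + 1 / r)"
  have L: "1 \<le> L" using r by (simp add: L_def one_le_ln_exp1_add)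
  have "m \<le> Mt" unfolding m_def Mt_def
    by (rule finite_measure.finite_measure_mono[OF finite_measure_mu_alpha[OF \<alpha>]]) simp_all
  have osc: "\<bar>p u - p z0\<bar> \<le> c / L" if "u \<in> pball z0 r" for u
    using abs_diff_le_on_pball[OF c hold z0 that] by (simp add: L_def)
  have "A / L \<le> A" using AN L mult_left_mono[of 1 L A] by (simp add: divide_le_eq)
  then have "2 * c / (P - 1) * (A / L + N) \<le> 2 * c / (P - 1) * (A + N)"
    using P c by (intro mult_left_mono) auto
  then have exp_le: "exp (2 * c / L / (P - 1) * (A + N * L)) \<le> exp (2 * c / (P - 1) * (A + N))"
    using L by (simp add: field_simps)
  show ?thesis
    using AE
  proof (rule eventually_mono, intro impI)
    fix z assume z: "P < p z \<and> p z < Q" "z \<in> pball z0 r"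
    have "AE u in mu_alpha \<alpha>. u \<in> pball z0 r \<longrightarrow> P < p u \<and> p u < Q \<and> p z - 2 * c / L \<le> p u"
      using AE by eventually_elim (use osc[OF z(2)] osc in force)
    then have "m powr ((harm_mean \<alpha> p (pball z0 r) - 1) / (p z - 1))
        \<le> max (Mt powr ((Q - P) / (P - 1))) (exp (2 * c / L / (P - 1) * (A + N * L))) * m"
      using z \<open>m \<le> Mt\<close> m P c L unfolding L_def m_def
      by (intro powr_harm_mean_exponent_le[OF \<alpha> pm]) auto
    also have "\<dots> \<le> max (Mt powr ((Q - P) / (P - 1))) (exp (2 * c / (P - 1) * (A + N))) * m"
      using exp_le m by (intro mult_right_mono max.mono) auto
    finally show "m powr ((harm_mean \<alpha> p (pball z0 r) - 1) / (p z - 1))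
        \<le> max (Mt powr ((Q - P) / (P - 1))) (exp (2 * c / (P - 1) * (A + N))) * m" .
  qed
qed

lemma bdry_pball_exponent_bound:
  fixes p :: "complex^'n \<Rightarrow> real" and \<alpha> P Q c :: real
  assumes \<alpha>: "\<alpha> > 0" and pm: "p \<in> borel_measurable (mu_alpha \<alpha>)"
    and P: "1 < P" "P < Q" and AE: "AE z in mu_alpha \<alpha>. P < p z \<and> p z < Q"
    and c: "0 \<le> c"
    and hold: "\<forall>z\<in>ball 0 1. \<forall>u\<in>ball 0 1. z \<noteq> u \<longrightarrow> \<bar>p z - p u\<bar> \<le> c / ln (exp 1 + 1 / pdist z u)"
  shows "\<exists>C0>0. \<forall>B\<in>bdry_balls. AE z in mu_alpha \<alpha>. z \<in> B \<longrightarrow>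
    measure (mu_alpha \<alpha>) B powr ((harm_mean \<alpha> p B - 1) / (p z - 1)) \<le> C0 * measure (mu_alpha \<alpha>) B"
proof -
  obtain A N where AN: "0 \<le> A" "0 \<le> N"
    and ln_le: "\<And>z r. norm (z::complex^'n) < 1 \<Longrightarrow> r > 1 - norm z \<Longrightarrow>
      0 < measure (mu_alpha \<alpha>) (pball z r) \<and>
      ln (1 / measure (mu_alpha \<alpha>) (pball z r)) \<le> A + N * ln (exp 1 + 1 / r)"
    using bdry_pball_measure_lower_bound[OF \<alpha>] by blast
  define C0 where "C0 = max (measure (mu_alpha \<alpha>) (UNIV :: (complex^'n) set) powr ((Q - P) / (P - 1)))
    (exp (2 * c / (P - 1) * (A + N)))"
  have "AE z in mu_alpha \<alpha>. z \<in> B \<longrightarrow>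
      measure (mu_alpha \<alpha>) B powr ((harm_mean \<alpha> p B - 1) / (p z - 1)) \<le> C0 * measure (mu_alpha \<alpha>) B"
    if "B \<in> bdry_balls" for B
  proof -
    obtain z0 r where B: "B = pball z0 r" "z0 \<in> ball 0 1" "r > 1 - norm z0"
      using \<open>B \<in> bdry_balls\<close> by (auto simp: bdry_balls_def)
    then have "norm z0 < 1" "0 < r" by auto
    with ln_le have "0 < measure (mu_alpha \<alpha>) (pball z0 r)"
      "ln (1 / measure (mu_alpha \<alpha>) (pball z0 r)) \<le> A + N * ln (exp 1 + 1 / r)"
      using B(3) by auto
    from pball_exponent_bound[OF \<alpha> pm P AE c hold B(2) \<open>0 < r\<close> AN this]
    show ?thesis unfolding B(1) C0_def by simp
  qed
  moreover have "C0 > 0" by (simp add: C0_def less_max_iff_disj)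
  ultimately show ?thesis by blast
qed

section \<open>The estimate on a single pseudo-ball\<close>

definition Bq_ball :: "(complex^'n) measure \<Rightarrow> real \<Rightarrow> (complex^'n \<Rightarrow> real) \<Rightarrow> (complex^'n) set \<Rightarrow> ennreal"
  where "Bq_ball M q w B = ((\<integral>\<^sup>+ z\<in>B. ennreal (w z) \<partial>M) / emeasure M B) *
    epowr ((\<integral>\<^sup>+ z\<in>B. epowr (winv w z) (1 / (q - 1)) \<partial>M) / emeasure M B) (q - 1)"

definition Bplus_ball :: "(complex^'n) measure \<Rightarrow> real \<Rightarrow> (complex^'n \<Rightarrow> real) \<Rightarrow> (complex^'n \<Rightarrow> real)
    \<Rightarrow> (complex^'n) set \<Rightarrow> ennreal"
  where "Bplus_ball M e p w B = ennreal (measure M B powr (- e)) * (\<integral>\<^sup>+ z\<in>B. ennreal (w z) \<partial>M) *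
    vnorm M (\<lambda>z. conj_exp p z / p z) (\<lambda>z. indicator B z * winv w z)"

lemma Bq_const_eq_SUP: "Bq_const \<alpha> q w = (SUP B\<in>bdry_balls. Bq_ball (mu_alpha \<alpha>) q w B)"
  by (simp add: Bq_const_def Bq_ball_def wmeas_def)

lemma Bplus_const_eq_SUP:
  "Bplus_const \<alpha> p w = (SUP B\<in>bdry_balls. Bplus_ball (mu_alpha \<alpha>) (harm_mean \<alpha> p B) p w B)"
  by (simp add: Bplus_const_def Bplus_ball_def wmeas_def)

lemma epowr_ennreal: "0 \<le> x \<Longrightarrow> epowr (ennreal x) a = ennreal (x powr a)"
  by (simp add: epowr_def)

lemma epowr_top [simp]: "epowr top a = top"
  by (simp add: epowr_def)

lemma epowr_measurable [measurable]:
  assumes [measurable]: "f \<in> borel_measurable M" "g \<in> borel_measurable M"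
  shows "(\<lambda>z. epowr (f z) (g z)) \<in> borel_measurable M"
  unfolding epowr_def by measurable

lemma winv_measurable [measurable]:
  assumes [measurable]: "w \<in> borel_measurable M"
  shows "winv w \<in> borel_measurable M"
  unfolding winv_def[abs_def] by measurable

lemma powr_le_powr_add_powr:
  fixes x t s r :: real
  assumes "0 \<le> x" "0 < t" "0 < s" "s \<le> r"
  shows "x powr s \<le> t powr s + t powr (s - r) * x powr r"
proof (cases "x \<le> t")
  case True
  then have "x powr s \<le> t powr s" using assms by (intro powr_mono2) auto
  then show ?thesis by (simp add: add_increasing2)
next
  case False
  then have "x powr s = t powr s * (x / t) powr s" using assms by (simp add: powr_divide)
  also have "\<dots> \<le> t powr s * (x / t) powr r"
    using False assms by (intro mult_left_mono powr_mono) auto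
  also have "\<dots> = t powr (s - r) * x powr r"
    using False assms by (simp add: powr_divide powr_diff)
  finally show ?thesis by (simp add: add_increasing)
qed

lemma epowr_le_split:
  assumes "0 < l" "0 < t" "0 < s" "s \<le> r"
  shows "epowr x s \<le> ennreal (l powr s * t powr s) + ennreal (l powr s * t powr (s - r)) * epowr (x / ennreal l) r"
proof (cases "x = top")
  case True
  then show ?thesis using assms by (simp add: ennreal_top_divide ennreal_mult_top)
next
  case False
  then obtain y where y: "x = ennreal y" "0 \<le> y" by (cases x) auto
  have "y powr s = l powr s * (y / l) powr s" using assms y by (simp add: powr_divide)
  also have "\<dots> \<le> l powr s * (t powr s + t powr (s - r) * (y / l) powr r)"
    using assms y by (intro mult_left_mono powr_le_powr_add_powr) auto
  finally show ?thesis
    using assms y by (simp add: epowr_ennreal divide_ennreal ennreal_mult[symmetric] ennreal_plus[symmetric]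
        algebra_simps ennreal_leI del: ennreal_plus)
qed

lemma winv_powr_integral_le:
  fixes M :: "(complex^'n) measure" and p w :: "complex^'n \<Rightarrow> real"
  assumes B [measurable]: "B \<in> sets M" and mB: "emeasure M B = ennreal m" and m: "0 < m"
    and [measurable]: "p \<in> borel_measurable M" "w \<in> borel_measurable M"
    and q: "1 < q" and p_bounds: "AE z in M. z \<in> B \<longrightarrow> 1 < p z \<and> p z \<le> q"
    and C0: "0 < C0" and H: "AE z in M. z \<in> B \<longrightarrow> m powr ((e - 1) / (p z - 1)) \<le> C0 * m"
    and l: "0 < l"
    and modular: "(\<integral>\<^sup>+ z. epowr (indicator B z * winv w z / ennreal l) (conj_exp p z / p z) \<partial>M) \<le> 1"
  shows "(\<integral>\<^sup>+ z\<in>B. epowr (winv w z) (1 / (q - 1)) \<partial>M)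
    \<le> ennreal ((1 + C0) * m * m powr ((1 - e) / (q - 1)) * l powr (1 / (q - 1)))"
proof -
  define s where "s = 1 / (q - 1)"
  define T where "T = m powr ((1 - e) * s)"
  have "AE z in M. epowr (winv w z) s * indicator B z \<le> ennreal (l powr s * T) * indicator B z
      + ennreal (l powr s * T * C0 * m) * epowr (indicator B z * winv w z / ennreal l) (conj_exp p z / p z)"
    using p_bounds H
  proof eventually_elim
    case (elim z)
    show ?case
    proof (cases "z \<in> B")
      case True
      define r where "r = conj_exp p z / p z"
      have pz: "1 < p z" "p z \<le> q" "m powr ((e - 1) / (p z - 1)) \<le> C0 * m" using elim True by auto
      then have "s \<le> r" "0 < s" using q by (auto simp: s_def r_def conj_exp_def intro!: divide_left_mono)
      have "(m powr (1 - e)) powr (s - r) = T * m powr ((e - 1) / (p z - 1))"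
        using pz by (simp add: T_def r_def conj_exp_def powr_powr flip: powr_add) (simp add: field_simps)
      then have "(m powr (1 - e)) powr (s - r) \<le> T * (C0 * m)"
        using pz by (simp add: T_def mult_left_mono)
      then have coeff: "l powr s * (m powr (1 - e)) powr (s - r) \<le> l powr s * (T * (C0 * m))"
        by (rule mult_left_mono) simp
      have "epowr (winv w z) s \<le> ennreal (l powr s * T)
          + ennreal (l powr s * (m powr (1 - e)) powr (s - r)) * epowr (winv w z / ennreal l) r"
        using epowr_le_split[of l "m powr (1 - e)" s r "winv w z"] \<open>s \<le> r\<close> \<open>0 < s\<close> l m
        by (simp add: T_def powr_powr)
      also have "\<dots> \<le> ennreal (l powr s * T)
          + ennreal (l powr s * T * C0 * m) * epowr (winv w z / ennreal l) r"
        using coeff by (intro add_left_mono mult_right_mono ennreal_leI) (auto simp: mult_ac)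
      finally show ?thesis using True by (simp add: r_def)
    qed simp
  qed
  then have "(\<integral>\<^sup>+ z\<in>B. epowr (winv w z) s \<partial>M)
      \<le> (\<integral>\<^sup>+ z. ennreal (l powr s * T) * indicator B z
          + ennreal (l powr s * T * C0 * m) * epowr (indicator B z * winv w z / ennreal l) (conj_exp p z / p z) \<partial>M)"
    by (rule nn_integral_mono_AE)
  also have "\<dots> = ennreal (l powr s * T) * emeasure M B + ennreal (l powr s * T * C0 * m) *
      (\<integral>\<^sup>+ z. epowr (indicator B z * winv w z / ennreal l) (conj_exp p z / p z) \<partial>M)"
    unfolding conj_exp_def by (subst nn_integral_add) (auto simp: nn_integral_cmult nn_integral_cmult_indicator)
  also have "\<dots> \<le> ennreal (l powr s * T) * ennreal m + ennreal (l powr s * T * C0 * m) * 1"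
    using modular mB by (intro add_mono mult_left_mono) auto
  also have "\<dots> = ennreal ((1 + C0) * m * m powr ((1 - e) / (q - 1)) * l powr (1 / (q - 1)))"
    using l m C0 by (simp add: T_def s_def ennreal_mult[symmetric] ennreal_plus[symmetric] algebra_simps
        del: ennreal_plus)
  finally show ?thesis by (simp add: s_def)
qed

lemma epowr_winv_integral_le_vnorm:
  fixes M :: "(complex^'n) measure" and p w :: "complex^'n \<Rightarrow> real"
  assumes B [measurable]: "B \<in> sets M" and mB: "emeasure M B = ennreal m" and m: "0 < m"
    and [measurable]: "p \<in> borel_measurable M" "w \<in> borel_measurable M"
    and q: "1 < q" and p_bounds: "AE z in M. z \<in> B \<longrightarrow> 1 < p z \<and> p z \<le> q"
    and C0: "0 < C0" and H: "AE z in M. z \<in> B \<longrightarrow> m powr ((e - 1) / (p z - 1)) \<le> C0 * m"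
  shows "epowr (\<integral>\<^sup>+ z\<in>B. epowr (winv w z) (1 / (q - 1)) \<partial>M) (q - 1)
    \<le> ennreal ((1 + C0) powr (q - 1) * m powr (q - e)) *
      vnorm M (\<lambda>z. conj_exp p z / p z) (\<lambda>z. indicator B z * winv w z)"
proof -
  define S where "S = (\<integral>\<^sup>+ z\<in>B. epowr (winv w z) (1 / (q - 1)) \<partial>M)"
  define Mod where "Mod l = (\<integral>\<^sup>+ z. epowr (indicator B z * winv w z / ennreal l) (conj_exp p z / p z) \<partial>M)"
    for l
  define D where "D = (1 + C0) * m * m powr ((1 - e) / (q - 1))"
  have D: "0 < D" using C0 m by (simp add: D_def)
  have D_powr: "D powr (q - 1) = (1 + C0) powr (q - 1) * m powr (q - e)"
    using C0 m q by (simp add: D_def powr_mult powr_powr flip: powr_add)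
  have vn_eq: "vnorm M (\<lambda>z. conj_exp p z / p z) (\<lambda>z. indicator B z * winv w z)
      = Inf {ennreal l |l. 0 < l \<and> Mod l \<le> 1}"
    by (simp add: vnorm_def Mod_def)
  have S_le: "S \<le> ennreal (D * l powr (1 / (q - 1)))" if "0 < l" "Mod l \<le> 1" for l
    using winv_powr_integral_le[OF B mB m _ _ q p_bounds C0 H that(1)] that(2)
    by (simp add: S_def D_def Mod_def)
  show ?thesis
  proof (cases "\<exists>l>0. Mod l \<le> 1")
    case False
    then have "{ennreal l |l. 0 < l \<and> Mod l \<le> 1} = {}" by auto
    then have "vnorm M (\<lambda>z. conj_exp p z / p z) (\<lambda>z. indicator B z * winv w z) = top"
      by (simp only: vn_eq Inf_empty)
    then show ?thesis using D by (simp add: D_powr[symmetric] ennreal_mult_top)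
  next
    case True
    then obtain l0 where "0 < l0" "Mod l0 \<le> 1" by blast
    then have "S \<noteq> top" using S_le by (metis ennreal_neq_top neq_top_trans)
    then obtain Sr where Sr: "S = ennreal Sr" "0 \<le> Sr" by (cases S) auto
    have "ennreal (Sr powr (q - 1) / D powr (q - 1)) \<le> Inf {ennreal l |l. 0 < l \<and> Mod l \<le> 1}"
    proof (rule Inf_greatest, clarify)
      fix l assume l: "0 < l" "Mod l \<le> 1"
      then have "Sr \<le> D * l powr (1 / (q - 1))"
        using S_le[OF l] Sr D by (simp add: ennreal_le_iff)
      then have "Sr powr (q - 1) \<le> (D * l powr (1 / (q - 1))) powr (q - 1)"
        using Sr q by (intro powr_mono2) auto
      also have "\<dots> = D powr (q - 1) * l" using D l q by (simp add: powr_mult powr_powr)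
      finally show "ennreal (Sr powr (q - 1) / D powr (q - 1)) \<le> ennreal l"
        using D by (intro ennreal_leI) (simp add: divide_le_eq mult.commute)
    qed
    then have "ennreal (D powr (q - 1)) * ennreal (Sr powr (q - 1) / D powr (q - 1))
        \<le> ennreal (D powr (q - 1)) * Inf {ennreal l |l. 0 < l \<and> Mod l \<le> 1}"
      by (rule mult_left_mono) simp
    then show ?thesis
      using D Sr by (simp add: S_def[symmetric] vn_eq D_powr[symmetric] epowr_ennreal flip: ennreal_mult)
  qed
qed

lemma Bq_ball_le_Bplus_ball:
  fixes M :: "(complex^'n) measure" and p w :: "complex^'n \<Rightarrow> real"
  assumes B [measurable]: "B \<in> sets M" and mB: "emeasure M B = ennreal m" and m: "0 < m"
    and [measurable]: "p \<in> borel_measurable M" "w \<in> borel_measurable M"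
    and q: "1 < q" and p_bounds: "AE z in M. z \<in> B \<longrightarrow> 1 < p z \<and> p z \<le> q"
    and C0: "0 < C0" and H: "AE z in M. z \<in> B \<longrightarrow> m powr ((e - 1) / (p z - 1)) \<le> C0 * m"
  shows "Bq_ball M q w B \<le> ennreal ((1 + C0) powr (q - 1)) * Bplus_ball M e p w B"
proof -
  define W where "W = (\<integral>\<^sup>+ z\<in>B. ennreal (w z) \<partial>M)"
  define S where "S = (\<integral>\<^sup>+ z\<in>B. epowr (winv w z) (1 / (q - 1)) \<partial>M)"
  define vn where "vn = vnorm M (\<lambda>z. conj_exp p z / p z) (\<lambda>z. indicator B z * winv w z)"
  have S_vn: "epowr S (q - 1) \<le> ennreal ((1 + C0) powr (q - 1) * m powr (q - e)) * vn"
    unfolding S_def vn_def by (rule epowr_winv_integral_le_vnorm[OF assms])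
  have Bq: "Bq_ball M q w B = W / ennreal m * epowr (S / ennreal m) (q - 1)"
    by (simp add: Bq_ball_def W_def S_def mB)
  have Bplus: "Bplus_ball M e p w B = ennreal (m powr (- e)) * W * vn"
    using mB m by (simp add: Bplus_ball_def W_def vn_def measure_def)
  show ?thesis
  proof (cases "W = 0 \<or> S = top")
    case True
    moreover have "S = top \<Longrightarrow> vn = top"
      using S_vn by (auto simp: top_unique ennreal_mult_eq_top_iff)
    ultimately show ?thesis using m C0 by (auto simp: Bq Bplus ennreal_mult_top)
  next
    case False
    then obtain Sr where Sr: "S = ennreal Sr" "0 \<le> Sr" by (cases S) auto
    have "Bq_ball M q w B = W * ennreal (m powr (- q)) * epowr S (q - 1)"
    proof -
      have "m * m powr (q - 1) = m powr q"
        using m powr_add[of m 1 "q - 1"] by simp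
      then have "inverse m * (Sr / m) powr (q - 1) = m powr (- q) * Sr powr (q - 1)"
        using Sr m by (simp add: powr_divide powr_minus field_simps)
      then show ?thesis
        using Sr m by (simp add: Bq divide_ennreal epowr_ennreal ennreal_divide_times mult.assoc
            divide_ennreal_def inverse_ennreal flip: ennreal_mult divide_inverse)
    qed
    also have "\<dots> \<le> W * ennreal (m powr (- q)) * (ennreal ((1 + C0) powr (q - 1) * m powr (q - e)) * vn)"
      using S_vn by (rule mult_left_mono) simp
    also have "\<dots> = W * (ennreal (m powr (- q) * ((1 + C0) powr (q - 1) * m powr (q - e))) * vn)"
      using m C0 by (simp add: ennreal_mult mult_ac)
    also have "m powr (- q) * ((1 + C0) powr (q - 1) * m powr (q - e)) = (1 + C0) powr (q - 1) * m powr (- e)"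
      using m by (simp flip: powr_add)
    also have "W * (ennreal ((1 + C0) powr (q - 1) * m powr (- e)) * vn)
        = ennreal ((1 + C0) powr (q - 1)) * Bplus_ball M e p w B"
      using m C0 by (simp add: Bplus ennreal_mult mult_ac)
    finally show ?thesis .
  qed
qed

lemma Plog_exponent_range:
  assumes "\<alpha> > 0" "Plog \<alpha> p" "ereal q > esup (mu_alpha \<alpha>) p + 1"
  obtains P where "1 < P" "P < q - 1" "AE z in mu_alpha \<alpha>. P < p z \<and> p z < q - 1"
proof -
  have "ereal 1 < essinf (mu_alpha \<alpha>) p"
    using assms(2) by (simp add: Plog_def one_ereal_def)
  then obtain P where P: "ereal 1 < ereal P" "ereal P < essinf (mu_alpha \<alpha>) p"
    by (meson ereal_dense2)
  have esup: "esup (mu_alpha \<alpha>) p < ereal (q - 1)"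
    using assms(3) by (cases "esup (mu_alpha \<alpha>) p") auto
  have AE: "AE z in mu_alpha \<alpha>. P < p z \<and> p z < q - 1"
    using AE_greater_of_essinf_greater[OF P(2)] AE_less_of_esup_less[OF esup] by eventually_elim auto
  then show ?thesis
    using that P(1) AE_mu_alpha_ex[OF assms(1) AE] by auto
qed

lemma weight_measurable_mu_alpha:
  fixes w :: "complex^'n \<Rightarrow> real"
  assumes "weight w"
  shows "w \<in> borel_measurable (mu_alpha \<alpha>)"
proof -
  have "(borel_measurable (mu_alpha \<alpha>) :: (complex^'n \<Rightarrow> real) set) = borel_measurable lebesgue"
    by (rule measurable_cong_sets) simp_all
  then show ?thesis using assms by (simp add: weight_def)
qed

lemma Bq_const_le_Bplus_const:
  assumes "\<And>B. B \<in> bdry_balls \<Longrightarrow>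
    Bq_ball (mu_alpha \<alpha>) q w B \<le> ennreal C * Bplus_ball (mu_alpha \<alpha>) (harm_mean \<alpha> p B) p w B"
  shows "Bq_const \<alpha> q w \<le> ennreal C * Bplus_const \<alpha> p w"
  unfolding Bq_const_eq_SUP Bplus_const_eq_SUP
  using assms by (auto intro!: SUP_least order_trans[OF _ mult_left_mono[OF SUP_upper]])

theorem mainTheorem5:
  fixes \<alpha> q :: real and p :: "complex^'n \<Rightarrow> real"
  assumes "\<alpha> > 0" and "Plog \<alpha> p" and "ereal q > esup (mu_alpha \<alpha>) p + 1"
  shows "\<exists>C>0. \<forall>w :: complex^'n \<Rightarrow> real. weight w \<longrightarrow>
            Bq_const \<alpha> q w \<le> ennreal C * Bplus_const \<alpha> p w"
proof -
  have pm: "p \<in> borel_measurable (mu_alpha \<alpha>)" using assms(2) by (simp add: Plog_def)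
  obtain P where P: "1 < P" "P < q - 1" and AE: "AE z in mu_alpha \<alpha>. P < p z \<and> p z < q - 1"
    using Plog_exponent_range[OF assms] .
  obtain c where c: "0 \<le> c"
    and hold: "\<forall>z\<in>ball 0 1. \<forall>u\<in>ball 0 1. z \<noteq> u \<longrightarrow> \<bar>p z - p u\<bar> \<le> c / ln (exp 1 + 1 / pdist z u)"
    using Plog_nonneg_constant[OF assms(2)] .
  obtain C0 where C0: "0 < C0" and H: "\<forall>B\<in>bdry_balls. AE z in mu_alpha \<alpha>. z \<in> B \<longrightarrow>
      measure (mu_alpha \<alpha>) B powr ((harm_mean \<alpha> p B - 1) / (p z - 1)) \<le> C0 * measure (mu_alpha \<alpha>) B"
    using bdry_pball_exponent_bound[OF assms(1) pm P AE c hold] by blast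
  have "Bq_const \<alpha> q w \<le> ennreal ((1 + C0) powr (q - 1)) * Bplus_const \<alpha> p w" if "weight w" for w
  proof (rule Bq_const_le_Bplus_const)
    fix B :: "(complex^'n) set" assume B: "B \<in> bdry_balls"
    show "Bq_ball (mu_alpha \<alpha>) q w B
        \<le> ennreal ((1 + C0) powr (q - 1)) * Bplus_ball (mu_alpha \<alpha>) (harm_mean \<alpha> p B) p w B"
    proof (rule Bq_ball_le_Bplus_ball)
      show "AE z in mu_alpha \<alpha>. z \<in> B \<longrightarrow> 1 < p z \<and> p z \<le> q"
        using AE by eventually_elim (use P in auto)
    qed (use B pm weight_measurable_mu_alpha[OF that] H measure_bdry_ball_pos[OF assms(1) B] C0 P
        finite_measure.emeasure_eq_measure[OF finite_measure_mu_alpha[OF assms(1)]]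
        in \<open>auto simp: bdry_balls_def\<close>)
  qed
  moreover have "0 < (1 + C0) powr (q - 1)" using C0 by simp
  ultimately show ?thesis by blast
qed

end
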